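(* Let $m\ge 3$, $n\ge 2$, let $\mathcal{C}^3_{m,n}=(V_1,V_2,E)$, and let $e\in E$ be a hyperedge containing exactly two vertices of $V_1$ and one vertex of $V_2$. Then the Seidel spectrum of $\mathcal{C}^3_{m,n}-e$ consists of the eigenvalue $2n-1$ with multiplicity $m-3$, the eigenvalue $2m-1$ with multiplicity $n-2$, and the five roots $\tau_1,\dots,\tau_5$ of $\xi_2(\tau)=0$, where \begin{align*} \xi_2(\tau)={}&-\tau^5+(-5+5m+7n-4mn)\tau^4\\ &+(46+4m-8m^2+4n-22mn-6m^2n+4m^3n-18n^2+2mn^2+4m^2n^2+4mn^3)\tau^3\\ &+(286-206m+8m^2+4m^3-234n+62mn-10m^2n+40m^3n-8m^4n-46n^2-10mn^2\\ &\quad+64m^2n^2-24m^3n^2+36n^3+52mn^3-24m^2n^3-16mn^4)\tau^2\\ &+(83-228m-40m^2+40m^3+76n-90mn+246m^2n-28m^3n-16m^4n-366n^2+238mn^2\\ &\quad+132m^2n^2-160m^3n^2+32m^4n^2+248n^3+20mn^3-184m^2n^3+48m^3n^3-40n^4\\ &\quad-88mn^4+48m^2n^4+16mn^5)\tau\\ &+(-921+873m-408m^2+84m^3+2387n-2250mn+1274m^2n-368m^3n+24m^4n-2322n^2\\ &\quad+1994mn^2-680m^2n^2+40m^3n^2+32m^4n^2+1012n^3-732mn^3-160m^2n^3\\ &\quad+160m^3n^3-32m^4n^3-168n^4+72mn^4+160m^2n^4-32m^3n^4+16mn^5-32m^2n^5). \end{align*}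
   Context: For a hypergraph $\mathcal{H}$ and distinct vertices $i,j$, the co-degree $c_{ij}$ is the number of hyperedges containing both $i$ and $j$. The Seidel matrix $\mathcal{S}(\mathcal{H})$ has zero diagonal and $(i,j)$-entry $1-2c_{ij}$ for $i\neq j$; its eigenvalues (with multiplicity) form the Seidel spectrum of $\mathcal{H}$. The complete $3$-uniform bipartite hypergraph $\mathcal{C}^3_{m,n}=(V_1,V_2,E)$ has vertex set $V_1\sqcup V_2$, $|V_1|=m$, $|V_2|=n$, and $E$ = all $3$-subsets meeting both $V_1$ and $V_2$. For a hyperedge $e$, $\mathcal{H}-e$ denotes the hypergraph with the same vertex set and hyperedge set $E\setminus\{e\}$. *)

theory Defs
  imports "HOL-Computational_Algebra.Polynomial" "Jordan_Normal_Form.Char_Poly"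
begin

text \<open>Hypergraphs on the vertex set {0..<N}; a hypergraph is given by N and its set of hyperedges.\<close>

definition codegree :: "nat set set \<Rightarrow> nat \<Rightarrow> nat \<Rightarrow> nat" where
  "codegree E i j = card {e \<in> E. i \<in> e \<and> j \<in> e}"

definition seidel_matrix :: "nat \<Rightarrow> nat set set \<Rightarrow> real mat" where
  "seidel_matrix N E = mat N N (\<lambda>(i, j). if i = j then 0 else 1 - 2 * real (codegree E i j))"

definition seidel_spectrum :: "nat \<Rightarrow> nat set set \<Rightarrow> complex multiset" where
  "seidel_spectrum N E = proots (char_poly (map_mat complex_of_real (seidel_matrix N E)))"

definition V1 :: "nat \<Rightarrow> nat set" where "V1 m = {0..<m}"
definition V2 :: "nat \<Rightarrow> nat \<Rightarrow> nat set" where "V2 m n = {m..<m+n}"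

definition complete_bip3 :: "nat \<Rightarrow> nat \<Rightarrow> nat set set" where
  "complete_bip3 m n = {e. e \<subseteq> V1 m \<union> V2 m n \<and> card e = 3 \<and> e \<inter> V1 m \<noteq> {} \<and> e \<inter> V2 m n \<noteq> {}}"

definition xi2 :: "nat \<Rightarrow> nat \<Rightarrow> complex poly" where
  "xi2 m' n' = (let m = int m'; n = int n' in
    map_poly of_int
    [: -921+873*m-408*m^2+84*m^3+2387*n-2250*m*n+1274*m^2*n-368*m^3*n+24*m^4*n-2322*n^2
        +1994*m*n^2-680*m^2*n^2+40*m^3*n^2+32*m^4*n^2+1012*n^3-732*m*n^3-160*m^2*n^3
        +160*m^3*n^3-32*m^4*n^3-168*n^4+72*m*n^4+160*m^2*n^4-32*m^3*n^4+16*m*n^5-32*m^2*n^5,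
       83-228*m-40*m^2+40*m^3+76*n-90*m*n+246*m^2*n-28*m^3*n-16*m^4*n-366*n^2+238*m*n^2
        +132*m^2*n^2-160*m^3*n^2+32*m^4*n^2+248*n^3+20*m*n^3-184*m^2*n^3+48*m^3*n^3-40*n^4
        -88*m*n^4+48*m^2*n^4+16*m*n^5,
       286-206*m+8*m^2+4*m^3-234*n+62*m*n-10*m^2*n+40*m^3*n-8*m^4*n-46*n^2-10*m*n^2
        +64*m^2*n^2-24*m^3*n^2+36*n^3+52*m*n^3-24*m^2*n^3-16*m*n^4,
       46+4*m-8*m^2+4*n-22*m*n-6*m^2*n+4*m^3*n-18*n^2+2*m*n^2+4*m^2*n^2+4*m*n^3,
       -5+5*m+7*n-4*m*n,
       -1 :])"

end

theory Submission
  imports Defs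
begin

text \<open>Write e = {a, b, c} with a, b \<in> V1 and c \<in> V2. Off the diagonal, the Seidel matrix of
  C^3_{m,n} - e depends only on the classes of row and column in the partition
  {a, b}, V1 - {a, b}, {c}, V2 - {c}; so it is a class-constant matrix D + U Y with D diagonal.
  For x off the finitely many diagonal values, det (1 - A B) = det (1 - B A) turns
  det (x - S) into a determinant of the 4 x 4 quotient matrix Q, each class of size s
  contributing its diagonal value with multiplicity s - 1. The class {a, b} leaves the
  factor x - (2n - 3), and (x - (2n - 3)) det (x - Q) expands to - xi2 m n.\<close>

lemma poly_eqI_cofinite:
  fixes p q :: "'a :: {ring_char_0, idom} poly"
  assumes "finite A" and "\<And>x. x \<notin> A \<Longrightarrow> poly p x = poly q x"
  shows "p = q"
proof (rule ccontr)
  assume "p \<noteq> q"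
  then have "finite {x. poly (p - q) x = 0}" by (intro poly_roots_finite) simp
  moreover have "- A \<subseteq> {x. poly (p - q) x = 0}" using assms(2) by auto
  ultimately have "finite (UNIV :: 'a set)"
    using \<open>finite A\<close> by (metis Compl_partition2 finite_Un finite_subset)
  then show False using infinite_UNIV_char_0 by blast
qed

lemma det_mat_diag: "det (mat_diag n f) = (\<Prod>i<n. f i)"
  by (subst det_upper_triangular[of _ n]) (auto simp: mat_diag_def prod_list_diag_prod atLeast0LessThan)

lemma det_one_minus_mult_commute:
  fixes A :: "'a :: idom mat"
  assumes A: "A \<in> carrier_mat n k" and B: "B \<in> carrier_mat k n"
  shows "det (1\<^sub>m n - A * B) = det (1\<^sub>m k - B * A)"
proof -
  define M where "M = four_block_mat (1\<^sub>m n) A B (1\<^sub>m k)"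
  define P where "P = four_block_mat (1\<^sub>m n) (- A) (0\<^sub>m k n) (1\<^sub>m k)"
  have M: "M \<in> carrier_mat (n + k) (n + k)" and P: "P \<in> carrier_mat (n + k) (n + k)"
    using A B by (auto simp: M_def P_def)
  have "P * M = four_block_mat (1\<^sub>m n - A * B) (0\<^sub>m n k) B (1\<^sub>m k)"
    unfolding M_def P_def using A B
    by (subst mult_four_block_mat[of _ n n _ k _ k _ _ n _ k]) (auto simp: scalar_prod_def)
  moreover have "M * P = four_block_mat (1\<^sub>m n) (0\<^sub>m n k) B (1\<^sub>m k - B * A)"
    unfolding M_def P_def using A B
    by (subst mult_four_block_mat[of _ n n _ k _ k _ _ n _ k]) (auto simp: scalar_prod_def)
  moreover have "det P = 1"
    unfolding P_def using A by (subst det_four_block_mat_lower_left_zero[of _ n _ k]) auto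
  ultimately have "det (four_block_mat (1\<^sub>m n - A * B) (0\<^sub>m n k) B (1\<^sub>m k))
      = det (four_block_mat (1\<^sub>m n) (0\<^sub>m n k) B (1\<^sub>m k - B * A))"
    using det_mult[OF P M] det_mult[OF M P] by (metis mult.commute)
  moreover have "det (four_block_mat (1\<^sub>m n - A * B) (0\<^sub>m n k) B (1\<^sub>m k)) = det (1\<^sub>m n - A * B)"
    using A B by (subst det_four_block_mat_upper_right_zero[of _ n _ k]) auto
  moreover have "det (four_block_mat (1\<^sub>m n) (0\<^sub>m n k) B (1\<^sub>m k - B * A)) = det (1\<^sub>m k - B * A)"
    using A B by (subst det_four_block_mat_upper_right_zero[of _ n _ k]) auto
  ultimately show ?thesis by simp
qed

text \<open>quotient_mat r s d \<beta> is the quotient matrix of class_mat N cls d \<beta> when class k has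
  s k members.\<close>

definition class_mat :: "nat \<Rightarrow> (nat \<Rightarrow> nat) \<Rightarrow> (nat \<Rightarrow> 'a) \<Rightarrow> (nat \<Rightarrow> nat \<Rightarrow> 'a) \<Rightarrow> 'a :: {zero, plus} mat" where
  "class_mat N cls d \<beta> = mat N N (\<lambda>(i, j). (if i = j then d (cls i) else 0) + \<beta> (cls i) (cls j))"

definition quotient_mat :: "nat \<Rightarrow> (nat \<Rightarrow> nat) \<Rightarrow> (nat \<Rightarrow> 'a) \<Rightarrow> (nat \<Rightarrow> nat \<Rightarrow> 'a) \<Rightarrow> 'a :: semiring_1 mat" where
  "quotient_mat r s d \<beta> = mat r r (\<lambda>(k, l). (if k = l then d k else 0) + \<beta> k l * of_nat (s l))"

lemma prod_class_power:
  fixes cls :: "nat \<Rightarrow> nat" and f :: "nat \<Rightarrow> 'a :: comm_monoid_mult"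
  assumes "\<And>i. i < N \<Longrightarrow> cls i < r"
  shows "(\<Prod>i<N. f (cls i)) = (\<Prod>k<r. f k ^ card {i. i < N \<and> cls i = k})"
proof -
  have "(\<Prod>i<N. f (cls i)) = (\<Prod>k<r. \<Prod>i\<in>{i\<in>{..<N}. cls i = k}. f (cls i))"
    by (rule prod.group[symmetric]) (use assms in auto)
  also have "\<dots> = (\<Prod>k<r. f k ^ card {i. i < N \<and> cls i = k})"
    by (intro prod.cong refl) (simp add: lessThan_def)
  finally show ?thesis .
qed

lemma indicator_mult_mat:
  assumes "\<And>i. i < N \<Longrightarrow> cls i < r"
  shows "mat N r (\<lambda>(i, k). if cls i = k then u k else 0) * mat r M (\<lambda>(k, j). v k j)
       = mat N M (\<lambda>(i, j). u (cls i) * v (cls i) j)"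
proof (rule eq_matI)
  fix i j assume ij: "i < dim_row (mat N M (\<lambda>(i, j). u (cls i) * v (cls i) j))"
    "j < dim_col (mat N M (\<lambda>(i, j). u (cls i) * v (cls i) j))"
  have "(\<Sum>k<r. (if cls i = k then u k else 0) * v k j) = (\<Sum>k<r. if k = cls i then u k * v k j else 0)"
    by (intro sum.cong) auto
  then show "(mat N r (\<lambda>(i, k). if cls i = k then u k else 0) * mat r M (\<lambda>(k, j). v k j)) $$ (i, j)
      = mat N M (\<lambda>(i, j). u (cls i) * v (cls i) j) $$ (i, j)"
    using ij assms[of i] by (simp add: scalar_prod_def atLeast0LessThan)
qed auto

lemma mult_indicator_mat:
  "mat K N (\<lambda>(k, j). v k (cls j)) * mat N r (\<lambda>(i, l). if cls i = l then u l else 0)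
     = mat K r (\<lambda>(k, l). of_nat (card {j. j < N \<and> cls j = l}) * v k l * u l)"
proof (rule eq_matI)
  fix k l assume kl: "k < dim_row (mat K r (\<lambda>(k, l). of_nat (card {j. j < N \<and> cls j = l}) * v k l * u l))"
    "l < dim_col (mat K r (\<lambda>(k, l). of_nat (card {j. j < N \<and> cls j = l}) * v k l * u l))"
  have "(\<Sum>j<N. v k (cls j) * (if cls j = l then u l else 0)) = (\<Sum>j<N. if cls j = l then v k l * u l else 0)"
    by (intro sum.cong) auto
  also have "\<dots> = (\<Sum>j\<in>{j\<in>{..<N}. cls j = l}. v k l * u l)"
    by (rule sum.inter_filter[symmetric]) simp
  also have "{j\<in>{..<N}. cls j = l} = {j. j < N \<and> cls j = l}"
    by auto
  finally show "(mat K N (\<lambda>(k, j). v k (cls j)) * mat N r (\<lambda>(i, l). if cls i = l then u l else 0)) $$ (k, l)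
      = mat K r (\<lambda>(k, l). of_nat (card {j. j < N \<and> cls j = l}) * v k l * u l) $$ (k, l)"
    using kl by (simp add: scalar_prod_def atLeast0LessThan mult.assoc)
qed auto

lemma poly_char_poly_class_mat:
  fixes d :: "nat \<Rightarrow> 'a :: field" and \<beta> :: "nat \<Rightarrow> nat \<Rightarrow> 'a"
  assumes cls: "\<And>i. i < N \<Longrightarrow> cls i < r"
    and size: "\<And>k. k < r \<Longrightarrow> card {i. i < N \<and> cls i = k} = s k"
    and nonempty: "\<And>k. k < r \<Longrightarrow> s k \<noteq> 0"
    and x: "\<And>k. k < r \<Longrightarrow> x \<noteq> d k"
  shows "poly (char_poly (class_mat N cls d \<beta>)) x
       = (\<Prod>k<r. (x - d k) ^ (s k - 1)) * poly (char_poly (quotient_mat r s d \<beta>)) x"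
proof -
  define U where "U = mat N r (\<lambda>(i, k). if cls i = k then 1 / (x - d k) else 0)"
  define Y where "Y = mat r N (\<lambda>(k, j). \<beta> k (cls j))"
  have U: "U \<in> carrier_mat N r" and Y: "Y \<in> carrier_mat r N" by (simp_all add: U_def Y_def)
  have UY: "U * Y = mat N N (\<lambda>(i, j). 1 / (x - d (cls i)) * \<beta> (cls i) (cls j))"
    unfolding U_def Y_def by (rule indicator_mult_mat[OF cls])
  have YU: "Y * U = mat r r (\<lambda>(k, l). of_nat (card {j. j < N \<and> cls j = l}) * \<beta> k l * (1 / (x - d l)))"
    unfolding U_def Y_def by (rule mult_indicator_mat)
  have class_char: "- char_matrix (class_mat N cls d \<beta>) x
      = mat_diag N (\<lambda>i. x - d (cls i)) * (1\<^sub>m N - U * Y)"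
  proof -
    have "mat_diag N (\<lambda>i. x - d (cls i)) * (1\<^sub>m N - U * Y)
        = mat N N (\<lambda>(i, j). (x - d (cls i)) * (1\<^sub>m N - U * Y) $$ (i, j))"
      using U Y by (intro mat_diag_mult_left) auto
    also have "\<dots> = - char_matrix (class_mat N cls d \<beta>) x"
      using x[OF cls] by (intro eq_matI) (auto simp: UY class_mat_def char_matrix_def right_diff_distrib)
    finally show ?thesis ..
  qed
  have quotient_char: "- char_matrix (quotient_mat r s d \<beta>) x
      = (1\<^sub>m r - Y * U) * mat_diag r (\<lambda>l. x - d l)"
  proof -
    have "(1\<^sub>m r - Y * U) * mat_diag r (\<lambda>l. x - d l)
        = mat r r (\<lambda>(k, l). (1\<^sub>m r - Y * U) $$ (k, l) * (x - d l))"
      using U Y by (intro mat_diag_mult_right) auto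
    also have "\<dots> = - char_matrix (quotient_mat r s d \<beta>) x"
      using x by (intro eq_matI) (auto simp: YU size quotient_mat_def char_matrix_def left_diff_distrib)
    finally show ?thesis ..
  qed
  have "(\<Prod>i<N. x - d (cls i)) = (\<Prod>k<r. (x - d k) ^ s k)"
    using prod_class_power[where cls = cls and N = N and r = r, OF cls] size by simp
  also have "\<dots> = (\<Prod>k<r. (x - d k) ^ (s k - 1)) * (\<Prod>k<r. x - d k)"
    unfolding prod.distrib[symmetric] using nonempty
    by (intro prod.cong refl) (metis lessThan_iff power_eq_if mult.commute)
  finally have prod_classes: "(\<Prod>i<N. x - d (cls i)) = \<dots>" .
  have "poly (char_poly (class_mat N cls d \<beta>)) x = det (- char_matrix (class_mat N cls d \<beta>) x)"
    by (rule char_poly_matrix[of _ N]) (simp add: class_mat_def)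
  also have "\<dots> = (\<Prod>i<N. x - d (cls i)) * det (1\<^sub>m r - Y * U)"
    unfolding class_char using U Y
    by (subst det_mult[of _ N]) (auto simp: det_mat_diag det_one_minus_mult_commute[OF U Y])
  also have "\<dots> = (\<Prod>k<r. (x - d k) ^ (s k - 1)) * det (- char_matrix (quotient_mat r s d \<beta>) x)"
    unfolding prod_classes quotient_char using U Y
    by (subst det_mult[of _ r]) (auto simp: det_mat_diag)
  also have "\<dots> = (\<Prod>k<r. (x - d k) ^ (s k - 1)) * poly (char_poly (quotient_mat r s d \<beta>)) x"
    by (subst char_poly_matrix[of _ r]) (simp_all add: quotient_mat_def)
  finally show ?thesis .
qed

lemma char_poly_class_mat:
  fixes d :: "nat \<Rightarrow> 'a :: field_char_0" and \<beta> :: "nat \<Rightarrow> nat \<Rightarrow> 'a"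
  assumes "\<And>i. i < N \<Longrightarrow> cls i < r"
    and "\<And>k. k < r \<Longrightarrow> card {i. i < N \<and> cls i = k} = s k"
    and "\<And>k. k < r \<Longrightarrow> s k \<noteq> 0"
  shows "char_poly (class_mat N cls d \<beta>)
       = (\<Prod>k<r. [:- d k, 1:] ^ (s k - 1)) * char_poly (quotient_mat r s d \<beta>)"
proof (rule poly_eqI_cofinite[of "d ` {..<r}"])
  fix x assume "x \<notin> d ` {..<r}"
  then have "\<And>k. k < r \<Longrightarrow> x \<noteq> d k" by auto
  then show "poly (char_poly (class_mat N cls d \<beta>)) x
      = poly ((\<Prod>k<r. [:- d k, 1:] ^ (s k - 1)) * char_poly (quotient_mat r s d \<beta>)) x"
    by (simp add: poly_char_poly_class_mat[OF assms] poly_prod)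
qed simp

lemma det_2:
  assumes "A \<in> carrier_mat 2 2"
  shows "det A = A $$ (0, 0) * A $$ (1, 1) - A $$ (0, 1) * A $$ (1, 0)"
proof -
  have "det A = (\<Sum>j<2. A $$ (0, j) * cofactor A 0 j)" by (rule laplace_expansion_row[OF assms]) simp
  also have "\<dots> = A $$ (0, 0) * A $$ (1, 1) - A $$ (0, 1) * A $$ (1, 0)"
    using assms by (simp add: cofactor_def mat_delete_def numeral_2_eq_2 det_single lessThan_Suc)
  finally show ?thesis .
qed

lemma det_3:
  assumes "A \<in> carrier_mat 3 3"
  shows "det A = A $$ (0, 0) * (A $$ (1, 1) * A $$ (2, 2) - A $$ (1, 2) * A $$ (2, 1))
               - A $$ (0, 1) * (A $$ (1, 0) * A $$ (2, 2) - A $$ (1, 2) * A $$ (2, 0))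
               + A $$ (0, 2) * (A $$ (1, 0) * A $$ (2, 1) - A $$ (1, 1) * A $$ (2, 0))"
proof -
  have c: "\<And>j. mat_delete A 0 j \<in> carrier_mat 2 2" using mat_delete_carrier[OF assms] by simp
  have "det A = (\<Sum>j<3. A $$ (0, j) * cofactor A 0 j)" by (rule laplace_expansion_row[OF assms]) simp
  also have "\<dots> = A $$ (0, 0) * cofactor A 0 0 + A $$ (0, 1) * cofactor A 0 1
      + A $$ (0, 2) * cofactor A 0 2"
    by (simp add: numeral_3_eq_3 numeral_2_eq_2 lessThan_Suc)
  finally show ?thesis unfolding cofactor_def det_2[OF c]
    using assms by (simp add: mat_delete_def algebra_simps numeral_3_eq_3 numeral_2_eq_2 eval_nat_numeral)
qed

lemma det_4:
  assumes "A \<in> carrier_mat 4 4"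
  shows "det A = A $$ (0, 0) * (A $$ (1, 1) * (A $$ (2, 2) * A $$ (3, 3) - A $$ (2, 3) * A $$ (3, 2))
               - A $$ (1, 2) * (A $$ (2, 1) * A $$ (3, 3) - A $$ (2, 3) * A $$ (3, 1))
               + A $$ (1, 3) * (A $$ (2, 1) * A $$ (3, 2) - A $$ (2, 2) * A $$ (3, 1)))
             - A $$ (0, 1) * (A $$ (1, 0) * (A $$ (2, 2) * A $$ (3, 3) - A $$ (2, 3) * A $$ (3, 2))
               - A $$ (1, 2) * (A $$ (2, 0) * A $$ (3, 3) - A $$ (2, 3) * A $$ (3, 0))
               + A $$ (1, 3) * (A $$ (2, 0) * A $$ (3, 2) - A $$ (2, 2) * A $$ (3, 0)))
             + A $$ (0, 2) * (A $$ (1, 0) * (A $$ (2, 1) * A $$ (3, 3) - A $$ (2, 3) * A $$ (3, 1))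
               - A $$ (1, 1) * (A $$ (2, 0) * A $$ (3, 3) - A $$ (2, 3) * A $$ (3, 0))
               + A $$ (1, 3) * (A $$ (2, 0) * A $$ (3, 1) - A $$ (2, 1) * A $$ (3, 0)))
             - A $$ (0, 3) * (A $$ (1, 0) * (A $$ (2, 1) * A $$ (3, 2) - A $$ (2, 2) * A $$ (3, 1))
               - A $$ (1, 1) * (A $$ (2, 0) * A $$ (3, 2) - A $$ (2, 2) * A $$ (3, 0))
               + A $$ (1, 2) * (A $$ (2, 0) * A $$ (3, 1) - A $$ (2, 1) * A $$ (3, 0)))"
proof -
  have c: "\<And>j. mat_delete A 0 j \<in> carrier_mat 3 3" using mat_delete_carrier[OF assms] by simp
  have "det A = (\<Sum>j<4. A $$ (0, j) * cofactor A 0 j)" by (rule laplace_expansion_row[OF assms]) simp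
  also have "\<dots> = A $$ (0, 0) * cofactor A 0 0 + A $$ (0, 1) * cofactor A 0 1
      + A $$ (0, 2) * cofactor A 0 2 + A $$ (0, 3) * cofactor A 0 3"
    by (simp add: eval_nat_numeral numeral_3_eq_3 numeral_2_eq_2 lessThan_Suc)
  finally show ?thesis unfolding cofactor_def det_3[OF c]
    using assms by (simp add: mat_delete_def algebra_simps numeral_3_eq_3 numeral_2_eq_2 eval_nat_numeral)
qed

lemma codegree_eq_card_third_vertex:
  assumes uniform: "\<And>f. f \<in> E \<Longrightarrow> card f = 3" and "i \<noteq> j"
  shows "codegree E i j = card {k. k \<noteq> i \<and> k \<noteq> j \<and> {i, j, k} \<in> E}"
proof -
  let ?K = "{k. k \<noteq> i \<and> k \<noteq> j \<and> {i, j, k} \<in> E}"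
  have "{f \<in> E. i \<in> f \<and> j \<in> f} = (\<lambda>k. {i, j, k}) ` ?K"
  proof (intro equalityI subsetI)
    fix f assume f: "f \<in> {f \<in> E. i \<in> f \<and> j \<in> f}"
    then have "finite f" "card f = 3" using uniform by (auto intro: card_ge_0_finite)
    then have "card (f - {i, j}) = 1" using f \<open>i \<noteq> j\<close> by (simp add: card_Diff_subset)
    then obtain k where k: "f - {i, j} = {k}" by (auto simp: card_1_singleton_iff)
    then have "f = {i, j, k}" using f by blast
    moreover have "k \<noteq> i" "k \<noteq> j" using k by auto
    ultimately show "f \<in> (\<lambda>k. {i, j, k}) ` ?K" using f by auto
  qed auto
  moreover have "inj_on (\<lambda>k. {i, j, k}) ?K"
  proof (rule inj_onI)
    fix k k' assume "k \<in> ?K" and eq: "{i, j, k} = {i, j, k'}"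
    have "k \<in> {i, j, k'}" unfolding eq[symmetric] by simp
    then show "k = k'" using \<open>k \<in> ?K\<close> by auto
  qed
  ultimately show ?thesis unfolding codegree_def by (simp add: card_image)
qed

lemma codegree_Diff_singleton:
  assumes "finite E" "e \<in> E"
  shows "codegree (E - {e}) i j = codegree E i j - (if i \<in> e \<and> j \<in> e then 1 else 0)"
proof -
  have "{f \<in> E - {e}. i \<in> f \<and> j \<in> f} = {f \<in> E. i \<in> f \<and> j \<in> f} - {e}" by blast
  then show ?thesis using assms unfolding codegree_def by (auto simp: card_Diff_singleton)
qed

lemma finite_complete_bip3: "finite (complete_bip3 m n)"
proof (rule finite_subset)
  show "complete_bip3 m n \<subseteq> Pow (V1 m \<union> V2 m n)" unfolding complete_bip3_def by auto
qed (simp add: V1_def V2_def)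

lemma card_complete_bip3_edge: "f \<in> complete_bip3 m n \<Longrightarrow> card f = 3"
  by (simp add: complete_bip3_def)

lemma triple_in_complete_bip3_iff:
  assumes "i \<noteq> j" "i \<noteq> k" "j \<noteq> k"
  shows "{i, j, k} \<in> complete_bip3 m n \<longleftrightarrow>
    i < m + n \<and> j < m + n \<and> k < m + n \<and> (i < m \<or> j < m \<or> k < m) \<and> (m \<le> i \<or> m \<le> j \<or> m \<le> k)"
  using assms by (auto simp: complete_bip3_def V1_def V2_def)

lemma codegree_complete_bip3:
  assumes "i \<noteq> j" "i < m + n" "j < m + n"
  shows "codegree (complete_bip3 m n) i j =
    (if i < m \<and> j < m then n else if m \<le> i \<and> m \<le> j then m else m + n - 2)"
proof -
  have "{k. k \<noteq> i \<and> k \<noteq> j \<and> {i, j, k} \<in> complete_bip3 m n} =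
    (if i < m \<and> j < m then {m..<m + n} else if m \<le> i \<and> m \<le> j then {..<m} else {..<m + n} - {i, j})"
    using assms by (auto simp: triple_in_complete_bip3_iff)
  then show ?thesis
    using assms by (simp add: codegree_eq_card_third_vertex[OF card_complete_bip3_edge] card_Diff_subset
        numeral_2_eq_2)
qed

definition edge_class :: "nat \<Rightarrow> nat \<Rightarrow> nat \<Rightarrow> nat \<Rightarrow> nat \<Rightarrow> nat" where
  "edge_class m a b c i = (if i = a \<or> i = b then 0 else if i < m then 1 else if i = c then 2 else 3)"

definition edge_class_size :: "nat \<Rightarrow> nat \<Rightarrow> nat \<Rightarrow> nat" where
  "edge_class_size m n = (!) [2, m - 2, 1, n - 1]"

definition edge_class_codegree :: "nat \<Rightarrow> nat \<Rightarrow> nat \<Rightarrow> nat \<Rightarrow> nat" where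
  "edge_class_codegree m n k l =
     (if k \<le> 1 \<and> l \<le> 1 then n else if 2 \<le> k \<and> 2 \<le> l then m else m + n - 2)
     - (if k \<in> {0, 2} \<and> l \<in> {0, 2} then 1 else 0)"

text \<open>The diagonal shift - edge_class_entry m n k k gives the class matrix the zero diagonal
  of the Seidel matrix.\<close>

definition edge_class_entry :: "nat \<Rightarrow> nat \<Rightarrow> nat \<Rightarrow> nat \<Rightarrow> complex" where
  "edge_class_entry m n k l = 1 - 2 * of_nat (edge_class_codegree m n k l)"

lemma complete_bip3_edge_two_one:
  assumes "e \<in> complete_bip3 m n" "card (e \<inter> V1 m) = 2" "card (e \<inter> V2 m n) = 1"
  obtains a b c where "e = {a, b, c}" "a \<noteq> b" "a < m" "b < m" "m \<le> c" "c < m + n"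
proof -
  obtain a b where ab: "e \<inter> V1 m = {a, b}" "a \<noteq> b" using assms(2) by (auto simp: card_2_iff)
  obtain c where c: "e \<inter> V2 m n = {c}" using assms(3) by (auto simp: card_1_singleton_iff)
  have "e \<subseteq> V1 m \<union> V2 m n" using assms(1) by (simp add: complete_bip3_def)
  then have "e = {a, b, c}" using ab c by blast
  moreover have "a < m" "b < m" "m \<le> c" "c < m + n" using ab c by (auto simp: V1_def V2_def)
  ultimately show ?thesis using that ab(2) by blast
qed

lemma edge_class_less: "edge_class m a b c i < 4"
  by (simp add: edge_class_def)

lemma edge_class_size_nonzero:
  assumes "m \<ge> 3" "n \<ge> 2" "k < 4"
  shows "edge_class_size m n k \<noteq> 0"
proof -
  have "k = 0 \<or> k = 1 \<or> k = 2 \<or> k = 3" using \<open>k < 4\<close> by auto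
  then show ?thesis using assms by (auto simp: edge_class_size_def)
qed

lemma seidel_matrix_remove_edge:
  assumes e: "e = {a, b, c}" and "a \<noteq> b" "a < m" "b < m" "m \<le> c" "c < m + n"
  shows "map_mat complex_of_real (seidel_matrix (m + n) (complete_bip3 m n - {e}))
       = class_mat (m + n) (edge_class m a b c) (\<lambda>k. - edge_class_entry m n k k) (edge_class_entry m n)"
proof -
  let ?cls = "edge_class m a b c"
  have e_edge: "e \<in> complete_bip3 m n" using assms by (auto simp: triple_in_complete_bip3_iff)
  have in_V1: "?cls i \<le> 1 \<longleftrightarrow> i < m" for i using assms by (auto simp: edge_class_def)
  have in_V2: "2 \<le> ?cls i \<longleftrightarrow> m \<le> i" for i using in_V1[of i] by linarith
  have in_e: "?cls i \<in> {0, 2} \<longleftrightarrow> i \<in> e" for i using assms by (auto simp: edge_class_def)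
  have "codegree (complete_bip3 m n - {e}) i j = edge_class_codegree m n (?cls i) (?cls j)"
    if "i \<noteq> j" "i < m + n" "j < m + n" for i j
    unfolding edge_class_codegree_def in_V1 in_V2 in_e
    using that by (simp add: codegree_Diff_singleton[OF finite_complete_bip3 e_edge] codegree_complete_bip3)
  then show ?thesis
    by (intro eq_matI) (auto simp: seidel_matrix_def class_mat_def edge_class_entry_def)
qed

lemma card_edge_class:
  assumes "a \<noteq> b" "a < m" "b < m" "m \<le> c" "c < m + n" "k < 4"
  shows "card {i. i < m + n \<and> edge_class m a b c i = k} = edge_class_size m n k"
proof -
  have "k = 0 \<or> k = 1 \<or> k = 2 \<or> k = 3" using \<open>k < 4\<close> by auto
  moreover have "{i. i < m + n \<and> edge_class m a b c i = 0} = {a, b}"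
    and "{i. i < m + n \<and> edge_class m a b c i = 1} = {..<m} - {a, b}"
    and "{i. i < m + n \<and> edge_class m a b c i = 2} = {c}"
    and "{i. i < m + n \<and> edge_class m a b c i = 3} = {m..<m + n} - {c}"
    using assms by (auto simp: edge_class_def)
  ultimately show ?thesis using assms by (auto simp: edge_class_size_def card_Diff_subset)
qed

lemma of_nat_edge_class_codegree:
  assumes "m \<ge> 3" "n \<ge> 2"
  shows "of_nat (edge_class_codegree m n k l) =
     (if k \<le> 1 \<and> l \<le> 1 then of_nat n else if 2 \<le> k \<and> 2 \<le> l then of_nat m else of_nat m + of_nat n - 2)
     - (if k \<in> {0, 2} \<and> l \<in> {0, 2} then 1 else (0 :: 'a :: ring_1))"
  using assms by (auto simp: edge_class_codegree_def of_nat_diff)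

lemma of_nat_edge_class_size:
  assumes "m \<ge> 3" "n \<ge> 2" "k < 4"
  shows "of_nat (edge_class_size m n k) = [2, of_nat m - 2, 1, of_nat n - 1 :: 'a :: ring_1] ! k"
proof -
  have "k = 0 \<or> k = 1 \<or> k = 2 \<or> k = 3" using \<open>k < 4\<close> by auto
  then show ?thesis using assms by (auto simp: edge_class_size_def of_nat_diff)
qed

lemma char_poly_edge_quotient:
  assumes "m \<ge> 3" "n \<ge> 2"
  shows "[:edge_class_entry m n 0 0, 1:]
      * char_poly (quotient_mat 4 (edge_class_size m n) (\<lambda>k. - edge_class_entry m n k k) (edge_class_entry m n))
      = - xi2 m n"
proof (rule poly_ext)
  fix x :: complex
  let ?Q = "quotient_mat 4 (edge_class_size m n) (\<lambda>k. - edge_class_entry m n k k) (edge_class_entry m n)"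
  have Q: "?Q \<in> carrier_mat 4 4" by (simp add: quotient_mat_def)
  then have Qx: "- char_matrix ?Q x \<in> carrier_mat 4 4" by simp
  show "poly ([:edge_class_entry m n 0 0, 1:] * char_poly ?Q) x = poly (- xi2 m n) x"
    unfolding poly_mult char_poly_matrix[OF Q] det_4[OF Qx]
    by (simp add: char_matrix_def quotient_mat_def edge_class_entry_def of_nat_edge_class_codegree
        of_nat_edge_class_size assms xi2_def Let_def,
      simp add: algebra_simps power2_eq_square power3_eq_cube eval_nat_numeral)
qed

lemma xi2_nonzero: "xi2 m n \<noteq> 0"
proof -
  have "coeff (xi2 m n) 5 = -1" by (simp add: xi2_def Let_def eval_nat_numeral)
  then show ?thesis by auto
qed

theorem theorem2p8:
  fixes m n :: nat and e :: "nat set"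
  assumes "m \<ge> 3" and "n \<ge> 2"
    and "e \<in> complete_bip3 m n"
    and "card (e \<inter> V1 m) = 2" and "card (e \<inter> V2 m n) = 1"
  shows "seidel_spectrum (m + n) (complete_bip3 m n - {e}) =
           replicate_mset (m - 3) (of_nat (2 * n) - 1)
         + replicate_mset (n - 2) (of_nat (2 * m) - 1)
         + proots (xi2 m n)"
proof -
  obtain a b c where e: "e = {a, b, c}" and abc: "a \<noteq> b" "a < m" "b < m" "m \<le> c" "c < m + n"
    using complete_bip3_edge_two_one[OF assms(3-5)] by blast
  let ?\<beta> = "edge_class_entry m n" and ?s = "edge_class_size m n"
  let ?Q = "quotient_mat 4 ?s (\<lambda>k. - ?\<beta> k k) ?\<beta>"
  have "char_poly (map_mat complex_of_real (seidel_matrix (m + n) (complete_bip3 m n - {e})))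
      = (\<Prod>k<4. [:- (- ?\<beta> k k), 1:] ^ (?s k - 1)) * char_poly ?Q"
    unfolding seidel_matrix_remove_edge[OF e abc]
    by (rule char_poly_class_mat)
      (auto simp: edge_class_less card_edge_class[OF abc] edge_class_size_nonzero[OF assms(1,2)])
  also have "(\<Prod>k<4. [:- (- ?\<beta> k k), 1:] ^ (?s k - 1))
      = [:- (2 * of_nat n - 1), 1:] ^ (m - 3) * [:- (2 * of_nat m - 1), 1:] ^ (n - 2) * [:?\<beta> 0 0, 1:]"
    by (simp add: edge_class_size_def eval_nat_numeral lessThan_Suc mult_ac
        edge_class_entry_def edge_class_codegree_def del: mult_pCons_left mult_pCons_right)
  also have "\<dots> * char_poly ?Q
      = [:- (2 * of_nat n - 1), 1:] ^ (m - 3) * [:- (2 * of_nat m - 1), 1:] ^ (n - 2) * - xi2 m n"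
    unfolding char_poly_edge_quotient[OF assms(1,2), symmetric] by (simp only: mult.assoc)
  finally show ?thesis
    unfolding seidel_spectrum_def using xi2_nonzero[of m n] by (simp add: proots_mult proots_power)
qed

end
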